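(* Let $\mathcal{F},G:\mathbb{R}^p\times\mathbb{R}^q\to\mathbb{R}$ satisfy the standing assumptions (A1) and (A2) with constants $L>0$ and $M<\infty$, and fix $\delta>0$ and $\xi\in(0,1)$. Fix the total number of iterations $T\ge 1$ and constants $c>0$, $C>0$. Suppose the learning rates are constant in $t$, with $\eta_\alpha^{(t)}=\eta_\alpha=\frac{c}{T}$ where $\frac{c}{T}<1$, and $\eta_w^{(t)}=\eta_w=\frac{C}{\sqrt T}$ where $$\frac{C}{\sqrt T}<\min\Big(\frac{1-\xi}{L},\,1\Big).$$ Let $(w^t,\alpha^t)_{t\ge1}$ be generated by the EBOMLC iteration from an arbitrary initial point $(w^1,\alpha^1)$. Then there is a constant $H$ depending only on $M,L,\delta,\xi,c,C$ (and on $\mathcal{F}(w^1,\alpha^1)$), but not on $T$, such that $$\min_{1\le t\le T}\big\|\nabla_w\mathcal{F}(w^t,\alpha^t)\big\|^2\le \frac{H}{\sqrt T}.$$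
   Context: Notation: $\|\cdot\|$ is the Euclidean norm; for a function $\Phi(w,\alpha)$ of $(w,\alpha)\in\mathbb{R}^p\times\mathbb{R}^q$, $\nabla\Phi=(\nabla_w\Phi,\nabla_\alpha\Phi)$ denotes the full gradient in the joint variable. Standing assumptions. (A1) $\mathcal{F}$ and $G$ are differentiable on $\mathbb{R}^p\times\mathbb{R}^q$ and $\nabla\mathcal{F}$, $\nabla G$ are $L$-Lipschitz with respect to the joint variable $(w,\alpha)$, for some $L>0$. (A2) There is a finite $M$ such that for all $(w,\alpha)$: $|\mathcal{F}(w,\alpha)|\le M$, $|G(w,\alpha)|\le M$, $\|\nabla\mathcal{F}(w,\alpha)\|\le M$, $\|\nabla G(w,\alpha)\|\le M$. EBOMLC iteration. Fix constants $\delta>0$, $\xi\in(0,1)$ and positive learning rates $\eta_w^{(t)},\eta_\alpha^{(t)}$. Given $(w^t,\alpha^t)$, set $w^t_{(1)}=w^t-\eta_w^{(t)}\nabla_wG(w^t,\alpha^t)$ and define $\mathcal{Q}_t(w,\alpha)=G(w,\alpha)-G(w^t_{(1)},\alpha)$, where $w^t_{(1)}$ is treated as a constant when differentiating, so that $$\nabla\mathcal{Q}(w^t,\alpha^t):=\nabla G(w^t,\alpha^t)-\nabla G(w^t_{(1)},\alpha^t),$$ with components $\nabla_w\mathcal{Q},\nabla_\alpha\mathcal{Q}$. Define $$\bar\beta_t=\max\Big(\delta-\frac{\nabla_w\mathcal{F}(w^t,\alpha^t)^T\nabla_w\mathcal{Q}(w^t,\alpha^t)}{\|\nabla\mathcal{Q}(w^t,\alpha^t)\|^2},\,0\Big)$$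 if $\nabla\mathcal{Q}(w^t,\alpha^t)\neq0$, and $\bar\beta_t=0$ otherwise. Then update $$w^{t+1}=w^t-\eta_w^{(t)}\big(\nabla_w\mathcal{F}(w^t,\alpha^t)+\xi\bar\beta_t\nabla_w\mathcal{Q}(w^t,\alpha^t)\big),$$ $$\alpha^{t+1}=\alpha^t-\eta_\alpha^{(t)}\big(\nabla_\alpha\mathcal{F}(w^t,\alpha^t)+\xi\bar\beta_t\nabla_\alpha\mathcal{Q}(w^t,\alpha^t)\big).$$ (In the paper $w$ are main-model parameters, $\alpha$ meta-model parameters, $\mathcal{F}$ a mixture upper loss and $G$ a lower loss, but only (A1), (A2) are used.) *)

theory Defs
  imports "HOL-Analysis.Analysis"
begin

text \<open>A gradient field gF of F
  is a function with F having derivative (\<lambda>h. gF z \<bullet> h) at every z;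
  fst (gF z) is the w-component, snd (gF z) the alpha-component.\<close>

definition Qgrad :: "(('p::euclidean_space) \<times> ('q::euclidean_space) \<Rightarrow> 'p \<times> 'q) \<Rightarrow> real \<Rightarrow> 'p \<Rightarrow> 'q \<Rightarrow> 'p \<times> 'q" where
  "Qgrad gG eta_w w a = gG (w, a) - gG (w - eta_w *\<^sub>R fst (gG (w, a)), a)"

definition betabar :: "real \<Rightarrow> (('p::euclidean_space) \<times> ('q::euclidean_space) \<Rightarrow> 'p \<times> 'q)
    \<Rightarrow> ('p \<times> 'q \<Rightarrow> 'p \<times> 'q) \<Rightarrow> real \<Rightarrow> 'p \<Rightarrow> 'q \<Rightarrow> real" where
  "betabar delta gF gG eta_w w a =
     (let q = Qgrad gG eta_w w a in
      if q \<noteq> 0 then max (delta - (fst (gF (w, a)) \<bullet> fst q) / (norm q)\<^sup>2) 0 else 0)"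

definition ebomlc_step :: "real \<Rightarrow> real \<Rightarrow> real \<Rightarrow> real \<Rightarrow> (('p::euclidean_space) \<times> ('q::euclidean_space) \<Rightarrow> 'p \<times> 'q)
    \<Rightarrow> ('p \<times> 'q \<Rightarrow> 'p \<times> 'q) \<Rightarrow> 'p \<Rightarrow> 'q \<Rightarrow> 'p \<times> 'q" where
  "ebomlc_step delta xi eta_w eta_a gF gG w a =
     (let q = Qgrad gG eta_w w a; b = betabar delta gF gG eta_w w a in
      (w - eta_w *\<^sub>R (fst (gF (w, a)) + (xi * b) *\<^sub>R fst q),
       a - eta_a *\<^sub>R (snd (gF (w, a)) + (xi * b) *\<^sub>R snd q)))"

end

theory Submission
  imports Defs
begin

text \<open>
  An EBOMLC step moves along the direction gF + xi * betabar * Qgrad. Since Qgrad is the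
  difference of gG at two points eta_w apart, it is O(eta_w); hence the direction stays
  bounded, and the definition of betabar ensures that the correction can cancel at most a
  fraction xi of the descent term |nabla_w F|^2, up to an O(eta_w) error. The quadratic
  upper bound for the L-smooth F then gives a per-step decrease
  eta_w (1 - xi) |nabla_w F|^2 - O(1/T) for eta_w = C/sqrt T and eta_alpha = c/T.
  Telescoping over T steps and using |F| \<le> M bounds (1 - xi) C sqrt T times the minimum
  by F(w 1, alpha 1) + M + O(1).
\<close>

lemma lipschitz_gradient_quadratic_upper_bound:
  fixes F :: "'a::real_inner \<Rightarrow> real"
  assumes der: "\<And>z. (F has_derivative (\<lambda>h. gF z \<bullet> h)) (at z)"
    and lip: "\<And>z z'. norm (gF z - gF z') \<le> L * norm (z - z')"
    and "L \<ge> 0"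
  shows "F (z + d) \<le> F z + gF z \<bullet> d + L * (norm d)\<^sup>2"
proof -
  define f where "f s = F (z + s *\<^sub>R d) - s * (gF z \<bullet> d)" for s :: real
  have f_deriv: "(f has_derivative (\<lambda>h. h * ((gF (z + s *\<^sub>R d) - gF z) \<bullet> d))) (at s)" for s
  proof -
    have "((\<lambda>s. z + s *\<^sub>R d) has_derivative (\<lambda>h. h *\<^sub>R d)) (at s)"
      by (auto intro!: derivative_eq_intros)
    from has_derivative_compose[OF this der]
    have "((\<lambda>s. F (z + s *\<^sub>R d)) has_derivative (\<lambda>h. gF (z + s *\<^sub>R d) \<bullet> (h *\<^sub>R d)))
            (at s)"
      by (simp add: o_def)
    moreover have "((\<lambda>s. s * (gF z \<bullet> d)) has_derivative (\<lambda>h. h * (gF z \<bullet> d))) (at s)"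
      by (auto intro!: derivative_eq_intros)
    ultimately show ?thesis
      unfolding f_def using has_derivative_diff by (fastforce simp: algebra_simps inner_diff_left)
  qed
  then have "continuous_on {0..1} f"
    using has_derivative_continuous continuous_at_imp_continuous_on by blast
  then obtain s where s: "s \<in> {0<..<1}"
    and mvt: "norm (f 1 - f 0) \<le> norm ((1 - 0) * ((gF (z + s *\<^sub>R d) - gF z) \<bullet> d))"
    using mvt_general[of 0 1 f, OF _ _ f_deriv] by auto
  have "norm ((gF (z + s *\<^sub>R d) - gF z) \<bullet> d) \<le> norm (gF (z + s *\<^sub>R d) - gF z) * norm d"
    using Cauchy_Schwarz_ineq2 by simp
  also have "\<dots> \<le> L * (s * norm d) * norm d"
    using lip[of "z + s *\<^sub>R d" z] s by (intro mult_right_mono) auto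
  also have "\<dots> \<le> L * norm d * norm d"
    using s \<open>L \<ge> 0\<close> mult_left_le_one_le[of "norm d" s]
    by (intro mult_right_mono mult_left_mono) auto
  finally have "f 1 - f 0 \<le> L * (norm d)\<^sup>2"
    using mvt by (simp add: power2_eq_square)
  then show ?thesis
    by (simp add: f_def)
qed

lemma Min_le_of_descent:
  fixes f g :: "nat \<Rightarrow> real"
  assumes descent: "\<And>t. t \<in> {1..n} \<Longrightarrow> f (Suc t) \<le> f t - a * g t + e"
    and "a > 0" and "n \<ge> 1" and "lo \<le> f (Suc n)"
  shows "Min (g ` {1..n}) \<le> (f 1 - lo + n * e) / (a * n)"
proof -
  have Min_le_mean: "n * Min (g ` {1..n}) \<le> (\<Sum>t=1..n. g t)"
    using sum_bounded_below[of "{1..n}" "Min (g ` {1..n})" g] by simp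
  have telescoped: "f (Suc n) - f 1 \<le> n * e - a * (\<Sum>t=1..n. g t)"
  proof -
    have "f (Suc n) - f 1 = (\<Sum>t=1..n. f (Suc t) - f t)"
      using \<open>n \<ge> 1\<close> by (simp add: sum_Suc_diff)
    also have "\<dots> \<le> (\<Sum>t=1..n. e - a * g t)"
      using descent by (intro sum_mono) fastforce
    finally show ?thesis
      by (simp add: sum_subtractf sum_distrib_left)
  qed
  have "a * (n * Min (g ` {1..n})) \<le> f 1 - lo + n * e"
    using telescoped \<open>a > 0\<close> \<open>lo \<le> f (Suc n)\<close> mult_left_mono[OF Min_le_mean, of a]
    by linarith
  then show ?thesis
    using \<open>a > 0\<close> \<open>n \<ge> 1\<close> by (simp add: pos_le_divide_eq algebra_simps)
qed

lemma norm_bound_imp_nonneg: "(\<And>x. norm (f x) \<le> M) \<Longrightarrow> M \<ge> 0"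
  using norm_ge_zero order_trans by blast

lemma norm_fst_le_norm: "norm (fst z) \<le> norm z"
  by (metis norm_fst_le prod.collapse)

lemma norm_snd_le_norm: "norm (snd z) \<le> norm z"
  by (metis norm_snd_le prod.collapse)

lemma abs_inner_fst_le: "\<bar>x \<bullet> fst z\<bar> \<le> norm x * norm z"
  by (meson Cauchy_Schwarz_ineq2 mult_left_mono norm_fst_le_norm norm_ge_zero order_trans)

lemma norm_Qgrad_le:
  assumes lip: "\<And>z z'. norm (gG z - gG z') \<le> L * norm (z - z')"
    and bound: "\<And>z. norm (gG z) \<le> M"
    and "L \<ge> 0" and "eta_w \<ge> 0"
  shows "norm (Qgrad gG eta_w w a) \<le> L * eta_w * M"
proof -
  have "norm (Qgrad gG eta_w w a) \<le> L * norm ((w, a) - (w - eta_w *\<^sub>R fst (gG (w, a)), a))"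
    unfolding Qgrad_def by (rule lip)
  also have "\<dots> = L * (eta_w * norm (fst (gG (w, a))))"
    using \<open>eta_w \<ge> 0\<close> by (simp add: norm_Pair)
  also have "\<dots> \<le> L * (eta_w * M)"
    using order_trans[OF norm_fst_le_norm bound] \<open>L \<ge> 0\<close> \<open>eta_w \<ge> 0\<close>
    by (intro mult_left_mono) auto
  finally show ?thesis
    by (simp add: mult.assoc)
qed

lemma betabar_cases:
  obtains "betabar delta gF gG eta_w w a = 0"
  | "Qgrad gG eta_w w a \<noteq> 0"
    "betabar delta gF gG eta_w w a =
       delta - (fst (gF (w, a)) \<bullet> fst (Qgrad gG eta_w w a)) / (norm (Qgrad gG eta_w w a))\<^sup>2"
proof -
  let ?q = "Qgrad gG eta_w w a"
  let ?r = "delta - (fst (gF (w, a)) \<bullet> fst ?q) / (norm ?q)\<^sup>2"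
  have "betabar delta gF gG eta_w w a = (if ?q \<noteq> 0 then max ?r 0 else 0)"
    by (simp add: betabar_def Let_def)
  then show ?thesis
    using that by (cases "?q = 0"; cases "?r \<le> 0") (auto simp: max_def)
qed

lemma betabar_nonneg: "betabar delta gF gG eta_w w a \<ge> 0"
  unfolding betabar_def Let_def by simp

lemma betabar_mult_norm_Qgrad_le:
  assumes "delta \<ge> 0"
  shows "betabar delta gF gG eta_w w a * norm (Qgrad gG eta_w w a)
           \<le> delta * norm (Qgrad gG eta_w w a) + norm (fst (gF (w, a)))"
proof (cases rule: betabar_cases[of delta gF gG eta_w w a])
  case 1
  then show ?thesis
    using \<open>delta \<ge> 0\<close> by simp
next
  case 2
  define x where "x = fst (gF (w, a)) \<bullet> fst (Qgrad gG eta_w w a)"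
  define nq where "nq = norm (Qgrad gG eta_w w a)"
  have "nq > 0"
    using 2 by (simp add: nq_def)
  have "\<bar>x\<bar> \<le> norm (fst (gF (w, a))) * nq"
    unfolding x_def nq_def by (rule abs_inner_fst_le)
  then have "- x / nq \<le> norm (fst (gF (w, a)))"
    using \<open>nq > 0\<close> by (simp add: field_simps)
  moreover have "betabar delta gF gG eta_w w a * nq = delta * nq - x / nq"
    using 2 \<open>nq > 0\<close> by (simp add: x_def nq_def field_simps power2_eq_square)
  ultimately show ?thesis
    by (simp add: nq_def)
qed

lemma betabar_mult_inner_ge:
  fixes gF gG :: "'p::euclidean_space \<times> 'q::euclidean_space \<Rightarrow> 'p \<times> 'q"
    and eta_w :: real and w :: 'p and a :: 'q
  assumes "delta \<ge> 0"
  defines "x \<equiv> fst (gF (w, a)) \<bullet> fst (Qgrad gG eta_w w a)"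
  shows "betabar delta gF gG eta_w w a * x \<ge> - delta * \<bar>x\<bar> - (norm (fst (gF (w, a))))\<^sup>2"
proof (cases rule: betabar_cases[of delta gF gG eta_w w a])
  case 1
  have "0 \<le> delta * \<bar>x\<bar> + (norm (fst (gF (w, a))))\<^sup>2"
    using \<open>delta \<ge> 0\<close> by simp
  with 1 show ?thesis
    by simp
next
  case 2
  define nq where "nq = norm (Qgrad gG eta_w w a)"
  have "nq > 0"
    using 2 by (simp add: nq_def)
  have "\<bar>x\<bar> \<le> norm (fst (gF (w, a))) * nq"
    unfolding x_def nq_def by (rule abs_inner_fst_le)
  then have "x\<^sup>2 \<le> (norm (fst (gF (w, a))) * nq)\<^sup>2"
    by (metis abs_ge_zero power2_abs power_mono)
  then have "x\<^sup>2 / nq\<^sup>2 \<le> (norm (fst (gF (w, a))))\<^sup>2"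
    using \<open>nq > 0\<close> by (simp add: field_simps power_mult_distrib)
  moreover have "betabar delta gF gG eta_w w a * x = (delta - x / nq\<^sup>2) * x"
    using 2 by (simp add: x_def nq_def)
  then have "betabar delta gF gG eta_w w a * x = delta * x - x\<^sup>2 / nq\<^sup>2"
    by (simp add: algebra_simps power2_eq_square)
  moreover have "delta * x \<ge> - delta * \<bar>x\<bar>"
    using \<open>delta \<ge> 0\<close> mult_left_mono[of "- \<bar>x\<bar>" x delta] by simp
  ultimately show ?thesis
    by linarith
qed

definition ebomlc_direction :: "real \<Rightarrow> real \<Rightarrow> real
    \<Rightarrow> ('p::euclidean_space \<times> 'q::euclidean_space \<Rightarrow> 'p \<times> 'q)
    \<Rightarrow> ('p \<times> 'q \<Rightarrow> 'p \<times> 'q) \<Rightarrow> 'p \<Rightarrow> 'q \<Rightarrow> 'p \<times> 'q" where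
  "ebomlc_direction delta xi eta_w gF gG w a =
     gF (w, a) + (xi * betabar delta gF gG eta_w w a) *\<^sub>R Qgrad gG eta_w w a"

lemma ebomlc_step_eq:
  "ebomlc_step delta xi eta_w eta_a gF gG w a =
     (w - eta_w *\<^sub>R fst (ebomlc_direction delta xi eta_w gF gG w a),
      a - eta_a *\<^sub>R snd (ebomlc_direction delta xi eta_w gF gG w a))"
  by (simp add: ebomlc_step_def ebomlc_direction_def Let_def)

context
  fixes gF gG :: "'p::euclidean_space \<times> 'q::euclidean_space \<Rightarrow> 'p \<times> 'q"
    and L M delta xi eta_w :: real
  assumes lip_gG: "\<And>z z'. norm (gG z - gG z') \<le> L * norm (z - z')"
    and bound_gF: "\<And>z. norm (gF z) \<le> M"
    and bound_gG: "\<And>z. norm (gG z) \<le> M"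
    and L_nonneg: "L \<ge> 0" and delta_nonneg: "delta \<ge> 0"
    and xi: "0 \<le> xi" "xi \<le> 1"
    and eta_w_nonneg: "eta_w \<ge> 0"
begin

lemma norm_ebomlc_direction_le:
  assumes "eta_w \<le> 1"
  shows "norm (ebomlc_direction delta xi eta_w gF gG w a) \<le> (delta * L + 2) * M"
proof -
  define q where "q = Qgrad gG eta_w w a"
  define b where "b = betabar delta gF gG eta_w w a"
  have "norm q \<le> eta_w * (L * M)"
    using norm_Qgrad_le[OF lip_gG bound_gG L_nonneg eta_w_nonneg] by (simp add: q_def ac_simps)
  also have "\<dots> \<le> L * M"
    using \<open>eta_w \<le> 1\<close> eta_w_nonneg L_nonneg norm_bound_imp_nonneg[OF bound_gF]
    by (simp add: mult_left_le_one_le)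
  finally have "norm q \<le> L * M" .
  have "b \<ge> 0"
    by (simp add: b_def betabar_nonneg)
  have "norm ((xi * b) *\<^sub>R q) = xi * (b * norm q)"
    using xi \<open>b \<ge> 0\<close> by simp
  also have "\<dots> \<le> b * norm q"
    using xi \<open>b \<ge> 0\<close> by (simp add: mult_left_le_one_le)
  also have "\<dots> \<le> delta * norm q + norm (fst (gF (w, a)))"
    unfolding b_def q_def by (rule betabar_mult_norm_Qgrad_le[OF delta_nonneg])
  also have "\<dots> \<le> delta * (L * M) + M"
    using \<open>norm q \<le> L * M\<close> delta_nonneg order_trans[OF norm_fst_le_norm bound_gF]
    by (intro add_mono mult_left_mono)
  finally have "norm ((xi * b) *\<^sub>R q) \<le> delta * (L * M) + M" .
  moreover have "norm (ebomlc_direction delta xi eta_w gF gG w a) \<le> M + norm ((xi * b) *\<^sub>R q)"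
    unfolding ebomlc_direction_def b_def[symmetric] q_def[symmetric]
    using norm_triangle_ineq[of "gF (w, a)" "(xi * b) *\<^sub>R q"] bound_gF[of "(w, a)"] by linarith
  ultimately show ?thesis
    by (simp add: algebra_simps)
qed

lemma inner_fst_ebomlc_direction_ge:
  "fst (gF (w, a)) \<bullet> fst (ebomlc_direction delta xi eta_w gF gG w a)
     \<ge> (1 - xi) * (norm (fst (gF (w, a))))\<^sup>2 - xi * eta_w * delta * L * M\<^sup>2"
proof -
  define g where "g = fst (gF (w, a))"
  define q where "q = Qgrad gG eta_w w a"
  define b where "b = betabar delta gF gG eta_w w a"
  have "\<bar>g \<bullet> fst q\<bar> \<le> norm g * norm q"
    by (rule abs_inner_fst_le)
  also have "\<dots> \<le> M * (L * eta_w * M)"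
    using order_trans[OF norm_fst_le_norm bound_gF] norm_bound_imp_nonneg[OF bound_gF]
      norm_Qgrad_le[OF lip_gG bound_gG L_nonneg eta_w_nonneg]
    by (intro mult_mono) (auto simp: g_def q_def)
  finally have "delta * \<bar>g \<bullet> fst q\<bar> \<le> delta * (M * (L * eta_w * M))"
    using delta_nonneg by (rule mult_left_mono)
  moreover have "b * (g \<bullet> fst q) \<ge> - delta * \<bar>g \<bullet> fst q\<bar> - (norm g)\<^sup>2"
    unfolding g_def q_def b_def by (rule betabar_mult_inner_ge[OF delta_nonneg])
  ultimately have "b * (g \<bullet> fst q) \<ge> - delta * (M * (L * eta_w * M)) - (norm g)\<^sup>2"
    by linarith
  then have "xi * (b * (g \<bullet> fst q)) \<ge> xi * (- delta * (M * (L * eta_w * M)) - (norm g)\<^sup>2)"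
    using xi(1) by (rule mult_left_mono)
  moreover have "g \<bullet> fst (ebomlc_direction delta xi eta_w gF gG w a)
                   = (norm g)\<^sup>2 + xi * (b * (g \<bullet> fst q))"
    by (simp add: ebomlc_direction_def g_def q_def b_def inner_add_right power2_norm_eq_inner)
  ultimately show ?thesis
    unfolding g_def[symmetric] by (simp add: power2_eq_square algebra_simps)
qed

lemma ebomlc_step_descent:
  fixes F :: "'p \<times> 'q \<Rightarrow> real"
  assumes der: "\<And>z. (F has_derivative (\<lambda>h. gF z \<bullet> h)) (at z)"
    and lip_gF: "\<And>z z'. norm (gF z - gF z') \<le> L * norm (z - z')"
    and "eta_w \<le> 1" and "eta_a \<ge> 0"
  defines "R \<equiv> (delta * L + 2) * M"
  shows "F (ebomlc_step delta xi eta_w eta_a gF gG w a)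
           \<le> F (w, a) - eta_w * (1 - xi) * (norm (fst (gF (w, a))))\<^sup>2
              + eta_w\<^sup>2 * xi * delta * L * M\<^sup>2 + eta_a * M * R
              + L * (eta_w\<^sup>2 + eta_a\<^sup>2) * R\<^sup>2"
proof -
  define u where "u = ebomlc_direction delta xi eta_w gF gG w a"
  define d where "d = (- (eta_w *\<^sub>R fst u), - (eta_a *\<^sub>R snd u))"
  have "norm u \<le> R"
    unfolding u_def R_def using \<open>eta_w \<le> 1\<close> by (rule norm_ebomlc_direction_le)
  have "ebomlc_step delta xi eta_w eta_a gF gG w a = (w, a) + d"
    by (simp add: ebomlc_step_eq u_def d_def)
  then have descent: "F (ebomlc_step delta xi eta_w eta_a gF gG w a)
                        \<le> F (w, a) + gF (w, a) \<bullet> d + L * (norm d)\<^sup>2"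
    using lipschitz_gradient_quadratic_upper_bound[OF der lip_gF L_nonneg] by simp
  have "eta_w * ((1 - xi) * (norm (fst (gF (w, a))))\<^sup>2 - xi * eta_w * delta * L * M\<^sup>2)
          \<le> eta_w * (fst (gF (w, a)) \<bullet> fst u)"
    unfolding u_def using inner_fst_ebomlc_direction_ge eta_w_nonneg by (rule mult_left_mono)
  moreover have "\<bar>snd (gF (w, a)) \<bullet> snd u\<bar> \<le> M * R"
    using Cauchy_Schwarz_ineq2 order_trans[OF norm_snd_le_norm bound_gF]
      order_trans[OF norm_snd_le_norm \<open>norm u \<le> R\<close>] norm_bound_imp_nonneg[OF bound_gF]
    by (meson mult_mono norm_ge_zero order_trans)
  then have "- (eta_a * (snd (gF (w, a)) \<bullet> snd u)) \<le> eta_a * (M * R)"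
    using \<open>eta_a \<ge> 0\<close> mult_left_mono[of "- (snd (gF (w, a)) \<bullet> snd u)" "M * R" eta_a] by simp
  moreover have "gF (w, a) \<bullet> d
                   = - eta_w * (fst (gF (w, a)) \<bullet> fst u) - eta_a * (snd (gF (w, a)) \<bullet> snd u)"
    by (simp add: d_def inner_prod_def)
  moreover have "(norm d)\<^sup>2 \<le> (eta_w\<^sup>2 + eta_a\<^sup>2) * R\<^sup>2"
  proof -
    have "(norm d)\<^sup>2 = eta_w\<^sup>2 * (norm (fst u))\<^sup>2 + eta_a\<^sup>2 * (norm (snd u))\<^sup>2"
      by (simp add: d_def norm_Pair power_mult_distrib)
    also have "\<dots> \<le> eta_w\<^sup>2 * R\<^sup>2 + eta_a\<^sup>2 * R\<^sup>2"
      using order_trans[OF norm_fst_le_norm \<open>norm u \<le> R\<close>]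
        order_trans[OF norm_snd_le_norm \<open>norm u \<le> R\<close>]
      by (intro add_mono mult_left_mono power_mono) auto
    finally show ?thesis
      by (simp add: algebra_simps)
  qed
  then have "L * (norm d)\<^sup>2 \<le> L * ((eta_w\<^sup>2 + eta_a\<^sup>2) * R\<^sup>2)"
    using L_nonneg by (rule mult_left_mono)
  ultimately show ?thesis
    using descent by (simp add: power2_eq_square algebra_simps)
qed

end

definition ebomlc_rate_constant ::
    "real \<Rightarrow> real \<Rightarrow> real \<Rightarrow> real \<Rightarrow> real \<Rightarrow> real \<Rightarrow> real \<Rightarrow> real" where
  "ebomlc_rate_constant M L delta xi c C F1 =
     (let R = (delta * L + 2) * M
      in (F1 + M + C\<^sup>2 * xi * delta * L * M\<^sup>2 + c * M * R + L * (C\<^sup>2 + c\<^sup>2) * R\<^sup>2)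
         / ((1 - xi) * C))"

lemma ebomlc_convergence_rate:
  fixes F :: "'p::euclidean_space \<times> 'q::euclidean_space \<Rightarrow> real"
    and gF gG :: "'p \<times> 'q \<Rightarrow> 'p \<times> 'q"
    and w :: "nat \<Rightarrow> 'p" and \<alpha> :: "nat \<Rightarrow> 'q" and T :: nat
  assumes der: "\<And>z. (F has_derivative (\<lambda>h. gF z \<bullet> h)) (at z)"
    and lip_gF: "\<And>z z'. norm (gF z - gF z') \<le> L * norm (z - z')"
    and lip_gG: "\<And>z z'. norm (gG z - gG z') \<le> L * norm (z - z')"
    and bound_F: "\<And>z. \<bar>F z\<bar> \<le> M"
    and bound_gF: "\<And>z. norm (gF z) \<le> M"
    and bound_gG: "\<And>z. norm (gG z) \<le> M"
    and "L \<ge> 0" and "delta \<ge> 0" and "0 \<le> xi" and "xi < 1"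
    and "T \<ge> 1" and "c \<ge> 0" and "C > 0" and "C / sqrt T \<le> 1"
    and iter: "\<And>t. t \<ge> 1 \<Longrightarrow>
      (w (Suc t), \<alpha> (Suc t)) = ebomlc_step delta xi (C / sqrt T) (c / T) gF gG (w t) (\<alpha> t)"
  shows "Min ((\<lambda>t. (norm (fst (gF (w t, \<alpha> t))))\<^sup>2) ` {1..T})
           \<le> ebomlc_rate_constant M L delta xi c C (F (w 1, \<alpha> 1)) / sqrt T"
proof -
  define ew where "ew = C / sqrt T"
  define ea where "ea = c / T"
  define R where "R = (delta * L + 2) * M"
  define g where "g t = (norm (fst (gF (w t, \<alpha> t))))\<^sup>2" for t
  define E where "E = C\<^sup>2 * xi * delta * L * M\<^sup>2 + c * M * R + L * (C\<^sup>2 + c\<^sup>2) * R\<^sup>2"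
  have "T > 0" "sqrt T > 0"
    using \<open>T \<ge> 1\<close> by auto
  have "ew \<ge> 0" "ea \<ge> 0"
    using \<open>C > 0\<close> \<open>c \<ge> 0\<close> by (simp_all add: ew_def ea_def)
  have ew_sq: "ew\<^sup>2 = C\<^sup>2 / T"
    by (simp add: ew_def power_divide)
  have ea_sq: "ea\<^sup>2 \<le> c\<^sup>2 / T"
    unfolding ea_def power_divide using \<open>T \<ge> 1\<close>
    by (intro divide_left_mono) (auto simp: power2_eq_square)
  have descent: "F (w (Suc t), \<alpha> (Suc t)) \<le> F (w t, \<alpha> t) - ew * (1 - xi) * g t + E / T"
    if "t \<in> {1..T}" for t
  proof -
    have "F (w (Suc t), \<alpha> (Suc t)) \<le> F (w t, \<alpha> t) - ew * (1 - xi) * g t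
            + ew\<^sup>2 * xi * delta * L * M\<^sup>2 + ea * M * R + L * (ew\<^sup>2 + ea\<^sup>2) * R\<^sup>2"
      using ebomlc_step_descent[OF lip_gG bound_gF bound_gG \<open>L \<ge> 0\<close> \<open>delta \<ge> 0\<close>
          \<open>0 \<le> xi\<close> _ \<open>ew \<ge> 0\<close> der lip_gF _ \<open>ea \<ge> 0\<close>]
        iter[of t] that \<open>xi < 1\<close> \<open>C / sqrt T \<le> 1\<close>
      by (simp add: ew_def ea_def R_def g_def)
    moreover have "L * (ew\<^sup>2 + ea\<^sup>2) * R\<^sup>2 \<le> L * (C\<^sup>2 / T + c\<^sup>2 / T) * R\<^sup>2"
      using ea_sq \<open>L \<ge> 0\<close> by (simp add: ew_sq mult_left_mono mult_right_mono)
    moreover have "E / T = ew\<^sup>2 * xi * delta * L * M\<^sup>2 + ea * M * R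
                           + L * (C\<^sup>2 / T + c\<^sup>2 / T) * R\<^sup>2"
      using \<open>T > 0\<close> by (simp add: E_def ew_sq ea_def field_simps)
    ultimately show ?thesis
      by linarith
  qed
  have "- M \<le> F (w (Suc T), \<alpha> (Suc T))"
    using bound_F by (metis abs_le_D2 minus_le_iff)
  with descent have "Min (g ` {1..T}) \<le> (F (w 1, \<alpha> 1) - - M + T * (E / T)) / (ew * (1 - xi) * T)"
    using \<open>C > 0\<close> \<open>xi < 1\<close> \<open>T \<ge> 1\<close> \<open>sqrt T > 0\<close>
    by (intro Min_le_of_descent[where f = "\<lambda>t. F (w t, \<alpha> t)"]) (auto simp: ew_def)
  also have "\<dots> = ebomlc_rate_constant M L delta xi c C (F (w 1, \<alpha> 1)) / sqrt T"
  proof -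
    have "ew * (1 - xi) * T = (1 - xi) * C * sqrt T"
      using \<open>T > 0\<close> by (simp add: ew_def field_simps real_sqrt_mult[symmetric])
    moreover have "F (w 1, \<alpha> 1) - - M + T * (E / T) = F (w 1, \<alpha> 1) + M + E"
      using \<open>T > 0\<close> by simp
    ultimately show ?thesis
      by (simp add: ebomlc_rate_constant_def Let_def E_def R_def divide_divide_eq_left add.assoc)
  qed
  finally show ?thesis
    by (simp add: g_def)
qed

theorem theorem1:
  shows "\<exists>\<Phi> :: real \<Rightarrow> real \<Rightarrow> real \<Rightarrow> real \<Rightarrow> real \<Rightarrow> real \<Rightarrow> real \<Rightarrow> real.
    \<forall>(F :: (real^'p) \<times> (real^'q) \<Rightarrow> real) (G :: (real^'p) \<times> (real^'q) \<Rightarrow> real)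
      (gF :: (real^'p) \<times> (real^'q) \<Rightarrow> (real^'p) \<times> (real^'q)) (gG :: (real^'p) \<times> (real^'q) \<Rightarrow> (real^'p) \<times> (real^'q))
      (L :: real) (M :: real) (delta :: real) (xi :: real) (c :: real) (C :: real) (T :: nat)
      (w :: nat \<Rightarrow> real^'p) (\<alpha> :: nat \<Rightarrow> real^'q).
      (\<forall>z. (F has_derivative (\<lambda>h. gF z \<bullet> h)) (at z)) \<and>
      (\<forall>z. (G has_derivative (\<lambda>h. gG z \<bullet> h)) (at z)) \<and>
      L > 0 \<and>
      (\<forall>z z'. norm (gF z - gF z') \<le> L * norm (z - z')) \<and>
      (\<forall>z z'. norm (gG z - gG z') \<le> L * norm (z - z')) \<and>
      (\<forall>z. \<bar>F z\<bar> \<le> M \<and> \<bar>G z\<bar> \<le> M \<and> norm (gF z) \<le> M \<and> norm (gG z) \<le> M) \<and>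
      delta > 0 \<and> 0 < xi \<and> xi < 1 \<and>
      T \<ge> 1 \<and> c > 0 \<and> C > 0 \<and>
      c / real T < 1 \<and>
      C / sqrt (real T) < min ((1 - xi) / L) 1 \<and>
      (\<forall>t\<ge>1. (w (Suc t), \<alpha> (Suc t)) =
                ebomlc_step delta xi (C / sqrt (real T)) (c / real T) gF gG (w t) (\<alpha> t))
      \<longrightarrow> Min ((\<lambda>t. (norm (fst (gF (w t, \<alpha> t))))\<^sup>2) ` {1..T})
            \<le> \<Phi> M L delta xi c C (F (w 1, \<alpha> 1)) / sqrt (real T)"
  apply (intro exI[of _ ebomlc_rate_constant] allI impI)
  subgoal for F G gF gG L M delta xi c C T w \<alpha>
    by (elim conjE, rule ebomlc_convergence_rate[where gG = gG]) auto
  done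

end
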